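(* Let $C$ be an $A$-code of length $l>1$ with $L_{\mathrm{ind}}(C)=1$, and let $g^{(1)}=(g_{1,1},\ldots,g_{1,l})$ be the first element of the canonical basis of divisors of $C$ (so $g_{1,1}$ is a monic divisor of $f$). Let $h_{1,1}\in A$ be the image of the polynomial $f(x)/g_{1,1}(x)$. Let $C'\subseteq A^{l-1}$ be the code obtained from $C^{(2)}=\{c\in C: c_1=0\}$ by deleting the first coordinate, and let $H'=(h'_{ij})_{2\le i\le k,\,2\le j\le l}$ be any generator matrix of $C'^{\perp}$. For $2\le i\le k$ let $\alpha_i$ be the remainder, upon division by the polynomial $f/g_{1,1}$, of the polynomial $-\bigl(\sum_{j=2}^l h'_{ij}g_{1,j}\bigr)/g_{1,1}$ (entries regarded as polynomials of degree $<m$). Then the $k\times l$ matrix $$H=\begin{pmatrix} h_{1,1} & 0\ \cdots\ 0\\ \alpha_2 & \\ \vdots & H'\\ \alpha_k & \end{pmatrix}$$ is a generator matrix of $C^{\perp}$.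
   Context: Let $\mathbb{F}$ be a finite field, $f(x)\in\mathbb{F}[x]$ monic of degree $m$, and $A=\mathbb{F}[x]/\langle f(x)\rangle$, elements identified with polynomials of degree $<m$. An $A$-code of length $l$ is an $A$-submodule of $A^l$; a generator matrix of it is a matrix over $A$ whose rows generate it as an $A$-module. The dual is $C^\perp=\{a\in A^l:\sum_i a_ic_i=0\ \forall c\in C\}$. For $u\in A^l$, $L_{\mathrm{ind}}(u)$ is the smallest index of a nonzero entry ($\infty$ for $u=0$) and $L_{\mathrm{coef}}(u)$ is that entry. For nonzero $C$, $L_{\mathrm{ind}}(C)=\min_{u\in C}L_{\mathrm{ind}}(u)$; $L_{\mathrm{coef}}(C)$ is the monic polynomial $g$ of minimum degree such that some $c\in C$ has $L_{\mathrm{ind}}(c)=L_{\mathrm{ind}}(C)$, $L_{\mathrm{coef}}(c)=g$; such $c$ is a leading element. $C^{(1)}=C$, $C^{(n+1)}=\{c\in C^{(n)}:L_{\mathrm{ind}}(c)>L_{\mathrm{ind}}(C^{(n)})\}$ while $C^{(n)}\ne0$; with $k$ largest such that $C^{(k)}\neq0$, a tuple $(g^{(1)},\dots,g^{(k)})$ with $g^{(j)}$ a leading element of $C^{(j)}$ is a basis of divisors. If moreover, writing $g_{i,j_i}$ for the leading coefficient of $g^{(i)}$, one has $\deg g_{t,j_i}<\deg g_{i,j_i}$ for all $t<i$, the basis is the canonical basis of divisors (it exists and is unique for every nonzero $A$-code), and the matrix with rows $g^{(i)}$ is the canonical generator matrix (CGM). Leading coefficients of elements of a basis of divisors are monic divisors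 of $f$. *)

theory Defs
  imports "HOL-Computational_Algebra.Polynomial" "HOL-Library.Extended_Nat"
begin

text \<open>The ring A = F[x]/(f) is modelled by the polynomials p with p mod f = p
  (i.e. polynomials of degree < deg f); multiplication in A is (p * q) mod f.
  Vectors of length l over A are functions nat => 'a poly whose entries lie in A,
  indexed by 1..l and zero outside 1..l.\<close>

type_synonym 'a vec = "nat \<Rightarrow> 'a poly"

definition Aelem :: "'a::field poly \<Rightarrow> 'a poly \<Rightarrow> bool" where
  "Aelem f p \<longleftrightarrow> p mod f = p"

definition Avecs :: "'a::field poly \<Rightarrow> nat \<Rightarrow> 'a vec set" where
  "Avecs f l = {u. (\<forall>j. Aelem f (u j)) \<and> (\<forall>j. j \<notin> {1..l} \<longrightarrow> u j = 0)}"

definition is_code :: "'a::field poly \<Rightarrow> nat \<Rightarrow> 'a vec set \<Rightarrow> bool" where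
  "is_code f l C \<longleftrightarrow> C \<subseteq> Avecs f l \<and> (\<lambda>_. 0) \<in> C
     \<and> (\<forall>u\<in>C. \<forall>v\<in>C. (\<lambda>j. u j + v j) \<in> C)
     \<and> (\<forall>a. \<forall>u\<in>C. Aelem f a \<longrightarrow> (\<lambda>j. (a * u j) mod f) \<in> C)"

definition row_span :: "'a::field poly \<Rightarrow> nat set \<Rightarrow> (nat \<Rightarrow> 'a vec) \<Rightarrow> 'a vec set" where
  "row_span f I R = {(\<lambda>j. (\<Sum>i\<in>I. a i * R i j) mod f) | a. \<forall>i. Aelem f (a i)}"

definition gen_matrix :: "'a::field poly \<Rightarrow> nat \<Rightarrow> nat set \<Rightarrow> (nat \<Rightarrow> 'a vec) \<Rightarrow> 'a vec set \<Rightarrow> bool" where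
  "gen_matrix f l I R C \<longleftrightarrow> finite I \<and> (\<forall>i\<in>I. R i \<in> Avecs f l) \<and> row_span f I R = C"

definition dual :: "'a::field poly \<Rightarrow> nat \<Rightarrow> 'a vec set \<Rightarrow> 'a vec set" where
  "dual f l C = {a \<in> Avecs f l. \<forall>c\<in>C. (\<Sum>i=1..l. a i * c i) mod f = 0}"

definition Lind :: "'a::zero vec \<Rightarrow> enat" where
  "Lind u = (if u = (\<lambda>_. 0) then \<infinity> else enat (LEAST i. u i \<noteq> 0))"

definition Lcoef :: "'a::zero vec \<Rightarrow> 'a poly" where
  "Lcoef u = u (LEAST i. u i \<noteq> 0)"

definition Lind_code :: "'a::zero vec set \<Rightarrow> enat" where
  "Lind_code D = (INF u\<in>D. Lind u)"

definition nonzero_code :: "'a::zero vec set \<Rightarrow> bool" where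
  "nonzero_code D \<longleftrightarrow> (\<exists>c\<in>D. c \<noteq> (\<lambda>_. 0))"

definition leading_elem :: "'a::field vec set \<Rightarrow> 'a vec \<Rightarrow> bool" where
  "leading_elem D c \<longleftrightarrow> c \<in> D \<and> c \<noteq> (\<lambda>_. 0) \<and> Lind c = Lind_code D
     \<and> lead_coeff (Lcoef c) = 1
     \<and> (\<forall>c'\<in>D. c' \<noteq> (\<lambda>_. 0) \<and> Lind c' = Lind_code D \<and> lead_coeff (Lcoef c') = 1
            \<longrightarrow> degree (Lcoef c) \<le> degree (Lcoef c'))"

text \<open>subc C n is C^{(n+1)}.\<close>
primrec subc :: "'a::zero vec set \<Rightarrow> nat \<Rightarrow> 'a vec set" where
  "subc C 0 = C"
| "subc C (Suc n) = {c \<in> subc C n. Lind c > Lind_code (subc C n)}"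

definition code_seq :: "'a::zero vec set \<Rightarrow> nat \<Rightarrow> 'a vec set" where
  "code_seq C n = subc C (n - 1)"

definition basis_of_divisors :: "'a::field vec set \<Rightarrow> nat \<Rightarrow> (nat \<Rightarrow> 'a vec) \<Rightarrow> bool" where
  "basis_of_divisors C k g \<longleftrightarrow> k \<ge> 1 \<and> nonzero_code (code_seq C k)
     \<and> \<not> nonzero_code (code_seq C (Suc k))
     \<and> (\<forall>j\<in>{1..k}. leading_elem (code_seq C j) (g j))"

text \<open>Canonical basis of divisors; the degree of the zero polynomial is read as -infinity.\<close>
definition canonical_basis :: "'a::field vec set \<Rightarrow> nat \<Rightarrow> (nat \<Rightarrow> 'a vec) \<Rightarrow> bool" where
  "canonical_basis C k g \<longleftrightarrow> basis_of_divisors C k g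
     \<and> (\<forall>i\<in>{1..k}. \<forall>t\<in>{1..<i}.
          let ji = the_enat (Lind (g i)) in g t ji = 0 \<or> degree (g t ji) < degree (g i ji))"

definition del_first :: "'a::zero vec \<Rightarrow> 'a vec" where
  "del_first u = (\<lambda>j. if j = 0 then 0 else u (Suc j))"

end

theory Submission
  imports Defs
begin

text \<open>Let \<open>g\<close> be the first element of the basis of divisors. Its first coordinate \<open>g 1\<close>
  divides the first coordinate of every codeword, and divides \<open>f\<close>: otherwise subtracting a
  multiple of \<open>g\<close> would give a codeword whose first coordinate is nonzero of smaller degree,
  contradicting the minimality of \<open>g\<close>. So every codeword is \<open>t g + w\<close> with \<open>w \<in> C\<^sup>(\<^sup>2\<^sup>)\<close>,
  and \<open>a\<close> lies in the dual of \<open>C\<close> iff its tail \<open>(a\<^sub>2, \<dots>, a\<^sub>l)\<close> is orthogonal to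
  \<open>C\<^sup>(\<^sup>2\<^sup>)\<close> (i.e. lies in the row span of \<open>H'\<close>) and \<open>a\<^sub>1 g\<^sub>1\<^sub>1\<close> plus the pairing of the tail
  with \<open>(g\<^sub>1\<^sub>2, \<dots>, g\<^sub>1\<^sub>l)\<close> vanishes in \<open>A\<close>. Pairing the rows of \<open>H'\<close> with
  \<open>(f / g\<^sub>1\<^sub>1) g \<in> C\<^sup>(\<^sup>2\<^sup>)\<close> shows that \<open>g\<^sub>1\<^sub>1\<close> divides the polynomial whose quotient defines
  \<open>\<alpha>\<^sub>i\<close>; this makes the rows of \<open>H\<close> orthogonal to \<open>C\<close>. Conversely, once the tail of a dual
  vector is expanded in the rows of \<open>H'\<close>, the second condition fixes \<open>a\<^sub>1\<close> modulo
  \<open>f / g\<^sub>1\<^sub>1\<close>, i.e. up to a multiple of the first row of \<open>H\<close>.\<close>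

lemma Aelem_mod [simp]: "Aelem f (p mod f)"
  by (simp add: Aelem_def)

lemma Aelem_0 [simp]: "Aelem f 0"
  by (simp add: Aelem_def)

lemma Aelem_iff_degree:
  fixes f p :: "'a::field poly"
  assumes "f \<noteq> 0"
  shows "Aelem f p \<longleftrightarrow> p = 0 \<or> degree p < degree f"
  using assms by (metis Aelem_def degree_mod_less' mod_poly_less mod_0)

lemma Aelem_mod_dvd:
  fixes f h :: "'a::field poly"
  assumes "f \<noteq> 0" "h dvd f"
  shows "Aelem f (x mod h)"
proof (cases "x mod h = 0")
  case False
  have "h \<noteq> 0" using assms by auto
  then have "degree (x mod h) < degree f"
    using degree_mod_less'[OF _ False] dvd_imp_degree_le[OF assms(2,1)] by (meson order.strict_trans2)
  then show ?thesis using Aelem_iff_degree[OF assms(1)] by blast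
qed simp

lemma Avecs_0: "u \<in> Avecs f l \<Longrightarrow> u 0 = 0"
  by (simp add: Avecs_def)

lemma Avecs_mod [simp]: "u \<in> Avecs f l \<Longrightarrow> u j mod f = u j"
  by (simp add: Avecs_def Aelem_def)

lemma Least_nonzero_eq_1:
  fixes u :: "'a::zero vec"
  assumes "u 0 = 0" "u 1 \<noteq> 0"
  shows "(LEAST i. u i \<noteq> 0) = 1"
proof (rule Least_equality)
  show "u 1 \<noteq> 0" by fact
  show "1 \<le> i" if "u i \<noteq> 0" for i
    using that assms(1) by (cases i) auto
qed

lemma Lind_eq_1_iff:
  fixes u :: "'a::zero vec"
  assumes "u 0 = 0"
  shows "Lind u = 1 \<longleftrightarrow> u 1 \<noteq> 0"
proof
  assume u1: "u 1 \<noteq> 0"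
  then have "u \<noteq> (\<lambda>_. 0)" by meson
  then show "Lind u = 1"
    unfolding Lind_def Least_nonzero_eq_1[OF assms u1] by (simp add: one_enat_def)
next
  assume L: "Lind u = 1"
  then have ne: "u \<noteq> (\<lambda>_. 0)"
    by (auto simp: Lind_def)
  with L have "(LEAST i. u i \<noteq> 0) = 1"
    by (simp add: Lind_def one_enat_def)
  moreover have "u (LEAST i. u i \<noteq> 0) \<noteq> 0"
    using ne by (metis (mono_tags, lifting) LeastI_ex)
  ultimately show "u 1 \<noteq> 0" by simp
qed

lemma Lcoef_eq_first: "(u :: 'a::zero vec) 0 = 0 \<Longrightarrow> u 1 \<noteq> 0 \<Longrightarrow> Lcoef u = u 1"
  by (simp add: Lcoef_def Least_nonzero_eq_1)

lemma Lind_code_1_code_seq_2: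
  assumes "C \<subseteq> Avecs f l" "Lind_code C = 1"
  shows "code_seq C 2 = {c \<in> C. c 1 = 0}"
proof -
  have "1 < Lind c \<longleftrightarrow> c 1 = 0" if "c \<in> C" for c
  proof -
    have "1 \<le> Lind c"
      using assms(2) that unfolding Lind_code_def by (metis INF_lower)
    moreover have "Lind c = 1 \<longleftrightarrow> c 1 \<noteq> 0"
      using Lind_eq_1_iff Avecs_0 assms(1) that by blast
    ultimately show ?thesis by auto
  qed
  moreover have "code_seq C 2 = {c \<in> C. 1 < Lind c}"
    using assms(2) by (simp add: code_seq_def numeral_2_eq_2)
  ultimately show ?thesis by auto
qed

lemma code_mult_mem:
  assumes "is_code f l C" "c \<in> C"
  shows "(\<lambda>j. (t * c j) mod f) \<in> C"
proof -
  have "(\<lambda>j. (t mod f * c j) mod f) \<in> C"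
    using assms unfolding is_code_def by (simp add: Aelem_def)
  then show ?thesis by (simp add: mod_mult_left_eq)
qed

lemma code_diff_mult_mem:
  assumes "is_code f l C" "c \<in> C" "d \<in> C"
  shows "(\<lambda>j. (c j - t * d j) mod f) \<in> C"
proof -
  have C: "C \<subseteq> Avecs f l" and add: "\<And>u v. u \<in> C \<Longrightarrow> v \<in> C \<Longrightarrow> (\<lambda>j. u j + v j) \<in> C"
    using assms(1) unfolding is_code_def by simp_all
  let ?w = "\<lambda>j. c j + (- t * d j) mod f"
  have w: "?w \<in> C"
    using add[OF assms(2) code_mult_mem[OF assms(1,3)]] .
  have "?w = (\<lambda>j. (c j - t * d j) mod f)"
  proof
    fix j
    have "?w \<in> Avecs f l"
      using w C by blast
    then have "?w j = ?w j mod f"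
      by (rule Avecs_mod[symmetric])
    also have "\<dots> = (c j - t * d j) mod f"
      by (simp add: mod_simps)
    finally show "?w j = (c j - t * d j) mod f" .
  qed
  with w show ?thesis by simp
qed

locale first_leading_element =
  fixes f :: "'a::field poly" and l :: nat and C :: "'a vec set" and g :: "'a vec"
  assumes modulus_nonzero: "f \<noteq> 0"
    and code: "is_code f l C"
    and Lind_code_C: "Lind_code C = 1"
    and leading: "leading_elem C g"
begin

lemma code_Avecs: "C \<subseteq> Avecs f l"
  using code by (simp add: is_code_def)

lemma g_mem: "g \<in> C"
  using leading by (simp add: leading_elem_def)

lemma first_g_nonzero: "g 1 \<noteq> 0"
  using leading Lind_code_C Lind_eq_1_iff[of g] Avecs_0[of g] g_mem code_Avecs
  by (auto simp: leading_elem_def)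

lemma Lcoef_g: "Lcoef g = g 1"
  using Lcoef_eq_first[of g] Avecs_0[of g] g_mem code_Avecs first_g_nonzero by auto

lemma degree_first_g_less: "degree (g 1) < degree f"
  using Aelem_iff_degree[OF modulus_nonzero, of "g 1"] g_mem code_Avecs first_g_nonzero
  by (auto simp: Avecs_def)

lemma degree_first_g_le:
  assumes "c \<in> C" "Lind c = 1" "lead_coeff (Lcoef c) = 1"
  shows "degree (g 1) \<le> degree (Lcoef c)"
proof -
  have "c \<noteq> (\<lambda>_. 0)" using assms(2) by (auto simp: Lind_def)
  then show ?thesis
    using leading assms Lind_code_C Lcoef_g unfolding leading_elem_def by simp
qed

lemma first_eq_0_if_degree_less:
  assumes c: "c \<in> C" and deg: "degree (c 1) < degree (g 1)"
  shows "c 1 = 0"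
proof (rule ccontr)
  assume nz: "c 1 \<noteq> 0"
  define u where "u = lead_coeff (c 1)"
  have u: "u \<noteq> 0" using nz by (simp add: u_def)
  define c' where "c' = (\<lambda>j. ([:1 / u:] * c j) mod f)"
  have c': "c' \<in> C" unfolding c'_def by (rule code_mult_mem[OF code c])
  have "degree (smult (1 / u) (c 1)) < degree f"
    using deg degree_first_g_less by simp
  then have c'1: "c' 1 = smult (1 / u) (c 1)"
    by (simp add: c'_def mod_poly_less)
  then have "c' 1 \<noteq> 0" "lead_coeff (c' 1) = 1"
    using nz u by (simp_all add: u_def)
  moreover have "c' 0 = 0"
    using c' code_Avecs Avecs_0 by blast
  ultimately have "Lind c' = 1" "Lcoef c' = c' 1"
    using Lind_eq_1_iff[of c'] Lcoef_eq_first[of c'] by simp_all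
  then have "degree (g 1) \<le> degree (c' 1)"
    using degree_first_g_le[OF c'] \<open>lead_coeff (c' 1) = 1\<close> by simp
  with c'1 deg u show False by simp
qed

lemma first_g_dvd_if_cong:
  assumes c: "c \<in> C" and p: "c 1 mod f = p mod f"
  shows "g 1 dvd p"
proof -
  define w where "w = (\<lambda>j. (c j - (p div g 1) * g j) mod f)"
  have w: "w \<in> C" unfolding w_def by (rule code_diff_mult_mem[OF code c g_mem])
  have "w 1 = (c 1 mod f - (p div g 1) * g 1) mod f"
    by (simp add: w_def mod_diff_left_eq)
  also have "\<dots> = (p - (p div g 1) * g 1) mod f"
    unfolding p by (simp add: mod_diff_left_eq)
  also have "\<dots> = p mod g 1"
  proof (cases "p mod g 1 = 0")
    case False
    then have "degree (p mod g 1) < degree f"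
      using degree_mod_less'[OF first_g_nonzero] degree_first_g_less by (meson order.strict_trans)
    then show ?thesis by (simp add: minus_div_mult_eq_mod mod_poly_less)
  qed (simp add: minus_div_mult_eq_mod)
  finally have w1: "w 1 = p mod g 1" .
  show ?thesis
  proof (rule ccontr)
    assume "\<not> g 1 dvd p"
    then have "p mod g 1 \<noteq> 0" by (simp add: mod_eq_0_iff_dvd)
    moreover from this have "w 1 = 0"
      using first_eq_0_if_degree_less[OF w] w1 degree_mod_less'[OF first_g_nonzero] by simp
    ultimately show False using w1 by simp
  qed
qed

lemma first_g_dvd_first: "c \<in> C \<Longrightarrow> g 1 dvd c 1"
  using first_g_dvd_if_cong by blast

lemma first_g_dvd_modulus: "g 1 dvd f"
proof -
  have "(\<lambda>_. 0) \<in> C" using code by (simp add: is_code_def)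
  \<comment> \<open>\<open>f\<close> is congruent to the first coordinate of the zero codeword\<close>
  then show ?thesis using first_g_dvd_if_cong[of "\<lambda>_. 0" f] by simp
qed

lemma code_seq_2_eq: "code_seq C 2 = {c \<in> C. c 1 = 0}"
  using Lind_code_1_code_seq_2[OF code_Avecs Lind_code_C] .

end

lemma sum_mod_cong:
  "(\<And>i. i \<in> I \<Longrightarrow> F i mod f = G i mod f) \<Longrightarrow> sum F I mod f = sum G I mod (f :: 'a::field poly)"
  by (metis (mono_tags, lifting) mod_sum_eq sum.cong)

lemma dvd_mod_diff_self: "(f::'a::field poly) dvd x mod f - x"
  by (simp add: mod_eq_dvd_iff[symmetric])

lemma sum_atLeast_1_split:
  "1 \<le> (k::nat) \<Longrightarrow> (\<Sum>i=1..k. F i) = F 1 + (\<Sum>i=2..k. (F i :: 'a::comm_monoid_add))"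
  by (subst sum.atLeast_Suc_atMost) (simp_all add: eval_nat_numeral)

lemma row_in_row_span:
  assumes "finite I" "i \<in> I" "R i \<in> Avecs f l"
  shows "R i \<in> row_span f I R"
proof -
  let ?a = "\<lambda>i'. if i' = i then 1 mod f else 0"
  have "(\<Sum>i'\<in>I. ?a i' * R i' j) mod f = R i j" for j
  proof -
    have "(\<Sum>i'\<in>I. ?a i' * R i' j) = 1 mod f * R i j"
      using assms(1,2) by (simp add: if_distrib[of "\<lambda>x. x * _"] cong: if_cong)
    then show ?thesis using assms(3) by (simp add: mod_mult_left_eq)
  qed
  then have "R i = (\<lambda>j. (\<Sum>i'\<in>I. ?a i' * R i' j) mod f)" by (simp add: fun_eq_iff)
  then show ?thesis unfolding row_span_def by fastforce
qed

lemma row_span_memI: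
  assumes "u \<in> Avecs f l" "\<And>j. f dvd u j - (\<Sum>i\<in>I. a i * R i j)"
  shows "u \<in> row_span f I R"
proof -
  have "u j = (\<Sum>i\<in>I. a i mod f * R i j) mod f" for j
  proof -
    have "u j = (\<Sum>i\<in>I. a i * R i j) mod f"
      using assms Avecs_mod[OF assms(1), of j] by (metis mod_eq_dvd_iff)
    also have "\<dots> = (\<Sum>i\<in>I. a i mod f * R i j) mod f"
      by (rule sum_mod_cong) (simp add: mod_mult_left_eq)
    finally show ?thesis .
  qed
  then have "u = (\<lambda>j. (\<Sum>i\<in>I. a i mod f * R i j) mod f)" by (simp add: fun_eq_iff)
  then show ?thesis unfolding row_span_def by fastforce
qed

lemma row_span_subset_dual:
  assumes rows: "R ` I \<subseteq> dual f l C"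
  shows "row_span f I R \<subseteq> dual f l C"
proof
  fix v assume "v \<in> row_span f I R"
  then obtain a where v: "v = (\<lambda>j. (\<Sum>i\<in>I. a i * R i j) mod f)"
    unfolding row_span_def by blast
  have R0: "R i j = 0" if "i \<in> I" "j \<notin> {1..l}" for i j
  proof -
    have "R i \<in> dual f l C" using rows that(1) by blast
    then show ?thesis using that(2) by (simp add: dual_def Avecs_def)
  qed
  have "v \<in> Avecs f l"
    unfolding Avecs_def Aelem_def
  proof (intro CollectI conjI allI impI)
    show "v j mod f = v j" for j by (simp add: v)
    show "v j = 0" if "j \<notin> {1..l}" for j
      using R0[OF _ that] by (simp add: v)
  qed
  moreover have "(\<Sum>j=1..l. v j * c j) mod f = 0" if c: "c \<in> C" for c
  proof -
    have "(\<Sum>j=1..l. v j * c j) mod f = (\<Sum>j=1..l. (\<Sum>i\<in>I. a i * R i j) * c j) mod f"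
      by (rule sum_mod_cong) (simp add: v mod_mult_left_eq)
    also have "(\<Sum>j=1..l. (\<Sum>i\<in>I. a i * R i j) * c j) = (\<Sum>i\<in>I. a i * (\<Sum>j=1..l. R i j * c j))"
      by (simp add: sum_distrib_left sum_distrib_right mult.assoc) (rule sum.swap)
    also have "\<dots> mod f = 0"
      unfolding mod_eq_0_iff_dvd
    proof (rule dvd_sum)
      fix i assume "i \<in> I"
      then have "R i \<in> dual f l C" using rows by blast
      then have "(\<Sum>j=1..l. R i j * c j) mod f = 0"
        using c by (simp add: dual_def)
      then show "f dvd a i * (\<Sum>j=1..l. R i j * c j)"
        by (simp add: mod_eq_0_iff_dvd)
    qed
    finally show ?thesis .
  qed
  ultimately show "v \<in> dual f l C" by (simp add: dual_def)
qed

definition tail_pairing :: "nat \<Rightarrow> 'a::comm_ring vec \<Rightarrow> 'a vec \<Rightarrow> 'a poly" where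
  "tail_pairing l u c = (\<Sum>j=2..l. u (j - 1) * c j)"

lemma tail_pairing_del_first:
  assumes "1 \<le> l"
  shows "(\<Sum>j=1..l-1. u j * del_first c j) = tail_pairing l u c"
proof -
  have "(\<Sum>j=1..l-1. u j * del_first c j) = (\<Sum>j=1..l-1. u (Suc j - 1) * c (Suc j))"
    by (rule sum.cong) (simp_all add: del_first_def)
  also have "\<dots> = (\<Sum>j=Suc 1..Suc (l-1). u (j - 1) * c j)"
    by (rule sum.shift_bounds_cl_Suc_ivl[symmetric])
  also have "\<dots> = tail_pairing l u c"
    using assms unfolding tail_pairing_def by (simp add: numeral_2_eq_2)
  finally show ?thesis .
qed

lemma sum_split_tail_pairing:
  assumes "1 \<le> l"
  shows "(\<Sum>j=1..l. u j * c j) = u 1 * c 1 + tail_pairing l (del_first u) c"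
proof -
  have "(\<Sum>j=2..l. u j * c j) = tail_pairing l (del_first u) c"
    unfolding tail_pairing_def del_first_def by (rule sum.cong) simp_all
  then show ?thesis using sum_atLeast_1_split[OF assms, of "\<lambda>j. u j * c j"] by simp
qed

lemma tail_pairing_sum_left:
  "tail_pairing l (\<lambda>j. \<Sum>i\<in>I. b i * R i j) c = (\<Sum>i\<in>I. b i * tail_pairing l (R i) c)"
  unfolding tail_pairing_def
  by (simp add: sum_distrib_left sum_distrib_right mult.assoc) (rule sum.swap)

lemma tail_pairing_mult_right:
  "tail_pairing l u (\<lambda>j. t * c j) = t * tail_pairing l u c"
  unfolding tail_pairing_def by (simp add: algebra_simps sum_distrib_left)

lemma tail_pairing_diff_right:
  "tail_pairing l u (\<lambda>j. c j - t * d j) = tail_pairing l u c - t * tail_pairing l u d"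
  unfolding tail_pairing_def by (simp add: algebra_simps sum_subtractf sum_distrib_left)

lemma tail_pairing_dvd_diff_left:
  "(\<And>j. f dvd u j - v j) \<Longrightarrow> f dvd tail_pairing l u c - tail_pairing l v c"
  unfolding tail_pairing_def sum_subtractf[symmetric] left_diff_distrib[symmetric]
  by (intro dvd_sum dvd_mult2)

lemma tail_pairing_dvd_diff_right:
  "(\<And>j. f dvd c j - d j) \<Longrightarrow> f dvd tail_pairing l u c - tail_pairing l u d"
  unfolding tail_pairing_def sum_subtractf[symmetric] right_diff_distrib[symmetric]
  by (intro dvd_sum dvd_mult)

lemma del_first_dual:
  assumes a: "a \<in> dual f l C" and l: "1 \<le> l"
  shows "del_first a \<in> dual f (l - 1) (del_first ` {c \<in> C. c 1 = 0})"
proof -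
  have A: "a \<in> Avecs f l" using a by (simp add: dual_def)
  have "del_first a \<in> Avecs f (l - 1)"
    using A unfolding Avecs_def del_first_def by auto
  moreover have "(\<Sum>j=1..l-1. del_first a j * d j) mod f = 0"
    if d': "d \<in> del_first ` {c \<in> C. c 1 = 0}" for d
  proof -
    obtain c where c: "c \<in> C" "c 1 = 0" and d: "d = del_first c"
      using d' by blast
    have "(\<Sum>j=1..l-1. del_first a j * d j) = (\<Sum>j=1..l. a j * c j)"
      unfolding d tail_pairing_del_first[OF l] sum_split_tail_pairing[OF l] using c by simp
    then show ?thesis using a c by (simp add: dual_def)
  qed
  ultimately show ?thesis by (simp add: dual_def)
qed

definition ext_matrix :: "'a::field poly \<Rightarrow> nat \<Rightarrow> 'a vec \<Rightarrow> (nat \<Rightarrow> 'a vec) \<Rightarrow> nat \<Rightarrow> 'a vec" where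
  "ext_matrix f l g H' i j =
     (if i = 1 then if j = 1 then (f div g 1) mod f else 0
      else if j = 0 then 0
      else if j = 1 then (- (tail_pairing l (H' i) g div g 1)) mod (f div g 1)
      else H' i (j - 1))"

locale dual_extension = first_leading_element +
  fixes k :: nat and H' :: "nat \<Rightarrow> 'a::field vec"
  assumes l_gt_1: "1 < l" and k_ge_1: "1 \<le> k"
    and H'_gen: "gen_matrix f (l - 1) {2..k} H' (dual f (l - 1) (del_first ` code_seq C 2))"
begin

abbreviation H :: "nat \<Rightarrow> 'a vec" where
  "H \<equiv> ext_matrix f l g H'"

lemma modulus_eq: "f = (f div g 1) * g 1"
  using first_g_dvd_modulus by simp

lemma H'_dual: "i \<in> {2..k} \<Longrightarrow> H' i \<in> dual f (l - 1) (del_first ` code_seq C 2)"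
  using H'_gen row_in_row_span[of "{2..k}" i H' f "l - 1"] by (auto simp: gen_matrix_def)

lemma H'_Avecs: "i \<in> {2..k} \<Longrightarrow> H' i \<in> Avecs f (l - 1)"
  using H'_dual by (simp add: dual_def)

lemma tail_pairing_H'_dvd:
  assumes i: "i \<in> {2..k}" and c: "c \<in> C" "c 1 = 0"
  shows "f dvd tail_pairing l (H' i) c"
proof -
  have "del_first c \<in> del_first ` code_seq C 2"
    using c code_seq_2_eq by simp
  then have "(\<Sum>j=1..l-1. H' i j * del_first c j) mod f = 0"
    using H'_dual[OF i] unfolding dual_def by blast
  then show ?thesis
    using tail_pairing_del_first[of l "H' i" c] l_gt_1 by (simp add: mod_eq_0_iff_dvd)
qed

lemma tail_pairing_H'_dvd_diff:
  assumes i: "i \<in> {2..k}" and c: "c \<in> C"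
  shows "f dvd tail_pairing l (H' i) c - (c 1 div g 1) * tail_pairing l (H' i) g"
proof -
  define t where "t = c 1 div g 1"
  define w where "w = (\<lambda>j. (c j - t * g j) mod f)"
  have w: "w \<in> C" unfolding w_def by (rule code_diff_mult_mem[OF code c g_mem])
  have "c 1 = t * g 1" using first_g_dvd_first[OF c] by (simp add: t_def)
  then have "w 1 = 0" by (simp add: w_def)
  then have "f dvd tail_pairing l (H' i) w"
    by (rule tail_pairing_H'_dvd[OF i w])
  moreover have "f dvd tail_pairing l (H' i) w - tail_pairing l (H' i) (\<lambda>j. c j - t * g j)"
    by (rule tail_pairing_dvd_diff_right) (simp add: w_def dvd_mod_diff_self)
  ultimately have "f dvd tail_pairing l (H' i) w - (tail_pairing l (H' i) w
      - (tail_pairing l (H' i) c - t * tail_pairing l (H' i) g))"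
    unfolding tail_pairing_diff_right by (rule dvd_diff)
  then show ?thesis by (simp add: t_def)
qed

lemma first_g_dvd_tail_pairing:
  assumes i: "i \<in> {2..k}"
  shows "g 1 dvd tail_pairing l (H' i) g"
proof -
  define h where "h = f div g 1"
  define c where "c = (\<lambda>j. (h * g j) mod f)"
  have c: "c \<in> C" unfolding c_def by (rule code_mult_mem[OF code g_mem])
  have "c 1 = 0" using modulus_eq by (simp add: c_def h_def)
  then have "f dvd tail_pairing l (H' i) c"
    by (rule tail_pairing_H'_dvd[OF i c])
  moreover have "f dvd tail_pairing l (H' i) c - tail_pairing l (H' i) (\<lambda>j. h * g j)"
    by (rule tail_pairing_dvd_diff_right) (simp add: c_def dvd_mod_diff_self)
  ultimately have "f dvd tail_pairing l (H' i) c - (tail_pairing l (H' i) c - h * tail_pairing l (H' i) g)"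
    unfolding tail_pairing_mult_right by (rule dvd_diff)
  then have "h * g 1 dvd h * tail_pairing l (H' i) g"
    using modulus_eq by (simp add: h_def)
  moreover have "h \<noteq> 0" using modulus_eq modulus_nonzero h_def by force
  ultimately show ?thesis by simp
qed

lemma ext_matrix_first_row: "H 1 j = (if j = 1 then (f div g 1) mod f else 0)"
  by (simp add: ext_matrix_def)

lemma ext_matrix_first_column:
  "i \<noteq> 1 \<Longrightarrow> H i 1 = (- (tail_pairing l (H' i) g div g 1)) mod (f div g 1)"
  by (simp add: ext_matrix_def)

lemma ext_matrix_tail: "i \<noteq> 1 \<Longrightarrow> 2 \<le> j \<Longrightarrow> H i j = H' i (j - 1)"
  by (simp add: ext_matrix_def)

lemma del_first_ext_matrix: "i \<in> {2..k} \<Longrightarrow> del_first (H i) = H' i"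
  using Avecs_0[OF H'_Avecs] by (auto simp: del_first_def ext_matrix_def fun_eq_iff)

lemma del_first_ext_matrix_first_row: "del_first (H 1) = (\<lambda>_. 0)"
  by (simp add: del_first_def ext_matrix_def fun_eq_iff)

lemma ext_matrix_first_column_dvd:
  assumes i: "i \<in> {2..k}"
  shows "f dvd H i 1 * g 1 + tail_pairing l (H' i) g"
proof -
  define h where "h = f div g 1"
  define s where "s = tail_pairing l (H' i) g div g 1"
  have tp: "tail_pairing l (H' i) g = s * g 1"
    using first_g_dvd_tail_pairing[OF i] by (simp add: s_def)
  have "H i 1 = (- s) mod h"
    using i ext_matrix_first_column[of i] by (simp add: s_def h_def)
  then have "h dvd H i 1 + s"
    using dvd_mod_diff_self[of h "- s"] by simp
  then obtain q where q: "H i 1 + s = h * q" by blast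
  have "H i 1 * g 1 + tail_pairing l (H' i) g = (H i 1 + s) * g 1"
    unfolding tp by (simp add: algebra_simps)
  also have "\<dots> = q * (h * g 1)"
    unfolding q by (simp add: algebra_simps)
  also have "\<dots> = q * f"
    using modulus_eq by (simp add: h_def)
  finally show ?thesis by simp
qed

lemma ext_matrix_Avecs:
  assumes i: "i \<in> {1..k}"
  shows "H i \<in> Avecs f l"
proof (cases "i = 1")
  case True
  then show ?thesis using l_gt_1 by (auto simp: Avecs_def ext_matrix_def)
next
  case False
  then have i2: "i \<in> {2..k}" using i by auto
  have "Aelem f (H i 1)"
    unfolding ext_matrix_first_column[OF False]
    by (rule Aelem_mod_dvd[OF modulus_nonzero]) (metis modulus_eq dvd_triv_left)
  moreover have "Aelem f (H' i j)" for j
    using H'_Avecs[OF i2] by (simp add: Avecs_def)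
  moreover have "H' i (j - 1) = 0" if "j \<notin> {1..l}" "2 \<le> j" for j
  proof -
    have "j - 1 \<notin> {1..l - 1}" using that by auto
    then show ?thesis using H'_Avecs[OF i2] by (simp add: Avecs_def)
  qed
  ultimately show ?thesis
    using False l_gt_1 unfolding Avecs_def by (auto simp: ext_matrix_def)
qed

lemma ext_matrix_dual:
  assumes i: "i \<in> {1..k}"
  shows "H i \<in> dual f l C"
proof -
  have "(\<Sum>j=1..l. H i j * c j) mod f = 0" if c: "c \<in> C" for c
  proof -
    define t where "t = c 1 div g 1"
    have c1: "c 1 = t * g 1" using first_g_dvd_first[OF c] by (simp add: t_def)
    have split: "(\<Sum>j=1..l. H i j * c j) = H i 1 * c 1 + tail_pairing l (del_first (H i)) c"
      using sum_split_tail_pairing[of l "H i" c] l_gt_1 by simp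
    show ?thesis
    proof (cases "i = 1")
      case True
      have "(\<Sum>j=1..l. H i j * c j) mod f = ((f div g 1) * c 1) mod f"
        using split True ext_matrix_first_row[of 1] del_first_ext_matrix_first_row
        by (simp add: tail_pairing_def mod_mult_left_eq)
      also have "\<dots> = 0"
        by (subst c1, subst (2) modulus_eq) (simp add: algebra_simps)
      finally show ?thesis .
    next
      case False
      then have i2: "i \<in> {2..k}" using i by auto
      have eq: "H i 1 * c 1 + tail_pairing l (H' i) c
          = t * (H i 1 * g 1 + tail_pairing l (H' i) g)
            + (tail_pairing l (H' i) c - t * tail_pairing l (H' i) g)"
        unfolding c1 by (simp add: algebra_simps)
      have "f dvd t * (H i 1 * g 1 + tail_pairing l (H' i) g)
            + (tail_pairing l (H' i) c - t * tail_pairing l (H' i) g)"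
        using ext_matrix_first_column_dvd[OF i2] tail_pairing_H'_dvd_diff[OF i2 c]
        by (simp add: t_def)
      then show ?thesis
        unfolding split del_first_ext_matrix[OF i2] eq mod_eq_0_iff_dvd .
    qed
  qed
  then show ?thesis using ext_matrix_Avecs[OF i] by (simp add: dual_def)
qed

lemma dual_first_coefficient_dvd:
  assumes a: "a \<in> dual f l C"
    and b: "\<And>j. f dvd del_first a j - (\<Sum>i\<in>{2..k}. b i * H' i j)"
  shows "f dvd (a 1 - (\<Sum>i\<in>{2..k}. b i * H i 1)) * g 1"
proof -
  let ?tp = "\<lambda>i. tail_pairing l (H' i) g"
  have "(\<Sum>j=1..l. a j * g j) mod f = 0"
    using a g_mem by (simp add: dual_def)
  then have orth: "f dvd a 1 * g 1 + tail_pairing l (del_first a) g"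
    using sum_split_tail_pairing[of l a g] l_gt_1 by (simp add: mod_eq_0_iff_dvd)
  have tail: "f dvd tail_pairing l (del_first a) g - (\<Sum>i\<in>{2..k}. b i * ?tp i)"
    using tail_pairing_dvd_diff_left[of f "del_first a" "\<lambda>j. \<Sum>i\<in>{2..k}. b i * H' i j" l g] b
    by (simp add: tail_pairing_sum_left)
  have rows: "f dvd (\<Sum>i\<in>{2..k}. b i * (H i 1 * g 1 + ?tp i))"
    using ext_matrix_first_column_dvd by (intro dvd_sum dvd_mult) auto
  have eq: "(a 1 - (\<Sum>i\<in>{2..k}. b i * H i 1)) * g 1
      = (a 1 * g 1 + tail_pairing l (del_first a) g)
        - (tail_pairing l (del_first a) g - (\<Sum>i\<in>{2..k}. b i * ?tp i))
        - (\<Sum>i\<in>{2..k}. b i * (H i 1 * g 1 + ?tp i))"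
    by (simp add: algebra_simps sum.distrib sum_distrib_left)
  show ?thesis
    unfolding eq by (intro dvd_diff orth tail rows)
qed

lemma dual_subset_row_span: "dual f l C \<subseteq> row_span f {1..k} H"
proof
  fix a assume a: "a \<in> dual f l C"
  have "del_first a \<in> row_span f {2..k} H'"
    using del_first_dual[OF a] l_gt_1 H'_gen code_seq_2_eq by (simp add: gen_matrix_def)
  then obtain b where b: "del_first a = (\<lambda>j. (\<Sum>i\<in>{2..k}. b i * H' i j) mod f)"
    unfolding row_span_def by blast
  then have b_dvd: "f dvd del_first a j - (\<Sum>i\<in>{2..k}. b i * H' i j)" for j
    using dvd_mod_diff_self by simp
  define \<beta> where "\<beta> = a 1 - (\<Sum>i\<in>{2..k}. b i * H i 1)"
  have "(f div g 1) * g 1 dvd \<beta> * g 1"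
    using dual_first_coefficient_dvd[OF a b_dvd] modulus_eq by (simp add: \<beta>_def)
  then obtain d where d: "\<beta> = (f div g 1) * d"
    using first_g_nonzero by (auto elim: dvdE)
  show "a \<in> row_span f {1..k} H"
  proof (rule row_span_memI)
    show "a \<in> Avecs f l" using a by (simp add: dual_def)
    fix j
    let ?cf = "\<lambda>i. if i = 1 then d else b i"
    have sum_eq: "(\<Sum>i=1..k. ?cf i * H i j) = d * H 1 j + (\<Sum>i=2..k. b i * H i j)"
      using sum_atLeast_1_split[OF k_ge_1, of "\<lambda>i. ?cf i * H i j"] by simp
    consider "j = 0" | "j = 1" | "2 \<le> j" by linarith
    then show "f dvd a j - (\<Sum>i\<in>{1..k}. ?cf i * H i j)"
    proof cases
      case 1
      then have "H i j = 0" for i by (simp add: ext_matrix_def)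
      moreover have "a j = 0" using 1 a Avecs_0[of a f l] by (simp add: dual_def)
      ultimately show ?thesis using sum_eq by simp
    next
      case 2
      have "a 1 - (d * H 1 1 + (\<Sum>i=2..k. b i * H i 1)) = d * (f div g 1 - (f div g 1) mod f)"
        using d by (simp add: \<beta>_def ext_matrix_def algebra_simps)
      moreover have "f dvd d * (f div g 1 - (f div g 1) mod f)"
        using dvd_mod_diff_self[of f "f div g 1"] by (simp add: dvd_diff_commute)
      ultimately show ?thesis using 2 sum_eq by simp
    next
      case 3
      have "(\<Sum>i=2..k. b i * H i j) = (\<Sum>i=2..k. b i * H' i (j - 1))"
        using 3 by (intro sum.cong) (simp_all add: ext_matrix_tail)
      moreover have "H 1 j = 0" "a j = del_first a (j - 1)"
        using 3 by (simp_all add: ext_matrix_def del_first_def)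
      ultimately show ?thesis
        using b_dvd[of "j - 1"] sum_eq by simp
    qed
  qed
qed

theorem gen_matrix_ext_matrix: "gen_matrix f l {1..k} H (dual f l C)"
  using ext_matrix_Avecs ext_matrix_dual dual_subset_row_span row_span_subset_dual[of H "{1..k}"]
  unfolding gen_matrix_def by blast

end

lemma basis_of_divisors_leading_elem:
  assumes "basis_of_divisors C k g"
  shows "leading_elem C (g 1)"
proof -
  have "1 \<in> {1..k}" "\<forall>j\<in>{1..k}. leading_elem (code_seq C j) (g j)"
    using assms by (auto simp: basis_of_divisors_def)
  then have "leading_elem (code_seq C 1) (g 1)" by blast
  then show ?thesis by (simp add: code_seq_def)
qed

theorem mainTheorem2:
  fixes f :: "'a::{field,finite} poly"
    and l k kC :: nat
    and C :: "'a vec set"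
    and g :: "nat \<Rightarrow> 'a vec"
    and Hp :: "nat \<Rightarrow> 'a vec"
  assumes monic: "lead_coeff f = 1"
    and l_gt: "l > 1"
    and code: "is_code f l C"
    and lind: "Lind_code C = 1"
    and canon: "canonical_basis C kC g"
    and k_ge: "k \<ge> 1"
    and Hgen: "gen_matrix f (l - 1) {2..k} Hp (dual f (l - 1) (del_first ` code_seq C 2))"
  shows "gen_matrix f l {1..k}
     (\<lambda>i j. if i = 1 then (if j = 1 then (f div g 1 1) mod f else 0)
            else if j = 0 then 0
            else if j = 1 then
              (- ((\<Sum>jj=2..l. Hp i (jj - 1) * g 1 jj) div g 1 1)) mod (f div g 1 1)
            else Hp i (j - 1))
     (dual f l C)"
proof -
  have "leading_elem C (g 1)"
    using canon basis_of_divisors_leading_elem by (auto simp: canonical_basis_def)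
  moreover have "f \<noteq> 0"
    using monic by auto
  ultimately interpret dual_extension f l C "g 1" k Hp
    using l_gt code lind k_ge Hgen by unfold_locales auto
  show ?thesis
    using gen_matrix_ext_matrix unfolding ext_matrix_def tail_pairing_def .
qed

end
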